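(* Let $X\in\mathcal{M}(N,P)$, let $K$ be a positive integer with $K\le\min(N,P)$, and let $L\in\mathcal{M}(P,K)$ be arbitrary. Then $$\min_{Z\in\mathcal{S}(N,K)}\|X-ZL^T\|_F^2 \;=\; d_*(X^TX,\,LL^T)^2 .$$
   Context: $\mathcal{M}(N,K)$ denotes the set of real $N\times K$ matrices and $\mathcal{S}(N,K)=\{M\in\mathcal{M}(N,K): M^TM=I_K\}$ the set of $N\times K$ matrices with orthonormal columns. $\|A\|_F^2=\sum_{i,k}a_{i,k}^2$ is the squared Frobenius norm. For positive semi-definite matrices $A,B$ of the same size, $\sqrt{A}$ denotes the unique PSD square root, and the Bures–Wasserstein distance is $$d_*(A,B):=\Big(\operatorname{tr}(A)-2\operatorname{tr}\big(\sqrt{\sqrt{A}\,B\,\sqrt{A}}\big)+\operatorname{tr}(B)\Big)^{1/2}.$$ *)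

theory Defs
  imports "HOL-Analysis.Analysis"
begin

text \<open>Matrices are HOL-Analysis matrices: an N x P real matrix is of type real^'p^'n,
  with the dimensions given by the (finite) index types.\<close>

definition frob_sq :: "real^'p^'n \<Rightarrow> real" where
  "frob_sq A = (\<Sum>i\<in>UNIV. \<Sum>k\<in>UNIV. (A $ i $ k)^2)"

definition stiefel :: "(real^'k^'n) set" where
  "stiefel = {M. transpose M ** M = mat 1}"

definition psd :: "real^'n^'n \<Rightarrow> bool" where
  "psd A \<longleftrightarrow> transpose A = A \<and> (\<forall>x. 0 \<le> x \<bullet> (A *v x))"

definition psd_sqrt :: "real^'n^'n \<Rightarrow> real^'n^'n" where
  "psd_sqrt A = (THE B. psd B \<and> B ** B = A)"

definition bures_wasserstein :: "real^'n^'n \<Rightarrow> real^'n^'n \<Rightarrow> real" where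
  "bures_wasserstein A B =
     sqrt (trace A - 2 * trace (psd_sqrt (psd_sqrt A ** B ** psd_sqrt A)) + trace B)"

end

(* Put A = X^T X, B = L L^T and C = X L.  For Z with orthonormal columns, expanding the square
   gives ||X - Z L^T||^2 = tr A - 2 tr (Z^T C) + tr B.  For a thin singular value decomposition
   C = U S Q^T the cross term tr (Z^T C) is a combination of the singular values with weights at
   most 1, so it is at most tr S = tr sqrt (C^T C), with equality at Z = U Q^T.  On the
   Bures-Wasserstein side, R = sqrt A and M = R L give R B R = M M^T and M^T M = L^T A L = C^T C;
   as M M^T and M^T M share their nonzero eigenvalues, tr sqrt (R B R) = tr sqrt (C^T C). *)

theory Submission
  imports Defs
begin

section \<open>Spectral theorem for symmetric matrices\<close>

lemma inner_matrix_transpose: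
  fixes M :: "real^'a^'b"
  shows "x \<bullet> (M *v y) = (transpose M *v x) \<bullet> y"
  by (simp add: dot_lmul_matrix[symmetric])

lemma quadratic_nonpos_imp_linear_coeff_zero:
  fixes a b :: real
  assumes "\<And>t. a * t + b * t^2 \<le> 0"
  shows "a = 0"
proof (rule ccontr)
  assume "a \<noteq> 0"
  define c where "c = 1 / (\<bar>b\<bar> + 1)"
  have c: "c > 0" "\<bar>b\<bar> * c < 1" unfolding c_def by (auto simp: field_simps)
  have "1 + b * c > 0"
    using c abs_ge_minus_self[of b] mult_right_mono[of "- b" "\<bar>b\<bar>" c] by linarith
  hence "a^2 * c * (1 + b * c) > 0" using \<open>a \<noteq> 0\<close> c by simp
  moreover have "a * (a * c) + b * (a * c)^2 \<le> 0" by (rule assms)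
  hence "a^2 * c * (1 + b * c) \<le> 0" by (simp add: power2_eq_square algebra_simps)
  ultimately show False by linarith
qed

lemma rayleigh_quotient_max_exists:
  fixes A :: "real^'n^'n"
  assumes V: "subspace V" and "v \<in> V" "v \<noteq> 0"
  obtains x where "x \<in> V" "norm x = 1" "\<And>z. z \<in> V \<Longrightarrow> z \<bullet> (A *v z) \<le> (x \<bullet> (A *v x)) * (z \<bullet> z)"
proof -
  define S where "S = V \<inter> sphere 0 1"
  have "compact S"
    unfolding S_def using closed_subspace[OF V] by (metis Int_commute compact_Int_closed compact_sphere)
  moreover have "v /\<^sub>R norm v \<in> S" using assms unfolding S_def by (simp add: subspace_scale)
  hence "S \<noteq> {}" by auto
  moreover have "continuous_on S (\<lambda>x. x \<bullet> (A *v x))" by (intro continuous_intros)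
  ultimately obtain x where x: "x \<in> S" and max: "\<And>y. y \<in> S \<Longrightarrow> y \<bullet> (A *v y) \<le> x \<bullet> (A *v x)"
    using continuous_attains_sup by metis
  have "z \<bullet> (A *v z) \<le> (x \<bullet> (A *v x)) * (z \<bullet> z)" if z: "z \<in> V" for z
  proof (cases "z = 0")
    case False
    have "z /\<^sub>R norm z \<in> S" using z False V unfolding S_def by (simp add: subspace_scale)
    hence "(z /\<^sub>R norm z) \<bullet> (A *v (z /\<^sub>R norm z)) \<le> x \<bullet> (A *v x)" by (rule max)
    moreover have "(z /\<^sub>R norm z) \<bullet> (A *v (z /\<^sub>R norm z)) = (z \<bullet> (A *v z)) / (norm z)^2"
      by (simp add: matrix_vector_mult_scaleR power2_eq_square divide_inverse)
    ultimately have "(z \<bullet> (A *v z)) / (norm z)^2 \<le> x \<bullet> (A *v x)" by simp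
    thus ?thesis using False by (simp add: power2_norm_eq_inner divide_le_eq mult.commute)
  qed simp
  thus ?thesis using that x unfolding S_def by auto
qed

text \<open>Perturbing a maximiser \<open>x\<close> of the Rayleigh quotient within \<open>V\<close> along \<open>y \<perp> x\<close> shows
  \<open>y \<bullet> A x = 0\<close>; the residual \<open>A x - \<lambda> x\<close> is such a \<open>y\<close> and is therefore zero.\<close>

lemma rayleigh_quotient_maximiser_eigenvector:
  fixes A :: "real^'n^'n"
  assumes sym: "transpose A = A" and V: "subspace V" and inv: "\<And>y. y \<in> V \<Longrightarrow> A *v y \<in> V"
    and x: "x \<in> V" "norm x = 1"
    and max: "\<And>z. z \<in> V \<Longrightarrow> z \<bullet> (A *v z) \<le> (x \<bullet> (A *v x)) * (z \<bullet> z)"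
  shows "A *v x = (x \<bullet> (A *v x)) *\<^sub>R x"
proof -
  define l where "l = x \<bullet> (A *v x)"
  have xx: "x \<bullet> x = 1" using x(2) by (simp add: norm_eq_1)
  have orth: "y \<bullet> (A *v x) = 0" if y: "y \<in> V" "y \<bullet> x = 0" for y
  proof -
    have "(2 * (y \<bullet> (A *v x))) * t + (y \<bullet> (A *v y) - l * (y \<bullet> y)) * t^2 \<le> 0" for t
    proof -
      have "x + t *\<^sub>R y \<in> V" using V x(1) y(1) by (simp add: subspace_add subspace_scale)
      hence le: "(x + t *\<^sub>R y) \<bullet> (A *v (x + t *\<^sub>R y)) \<le> l * ((x + t *\<^sub>R y) \<bullet> (x + t *\<^sub>R y))"
        unfolding l_def by (rule max)
      have "x \<bullet> (A *v y) = y \<bullet> (A *v x)"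
        using inner_matrix_transpose[of x A y] sym by (simp add: inner_commute)
      hence "(x + t *\<^sub>R y) \<bullet> (A *v (x + t *\<^sub>R y)) = l + 2 * t * (y \<bullet> (A *v x)) + t^2 * (y \<bullet> (A *v y))"
        by (simp add: matrix_vector_right_distrib matrix_vector_mult_scaleR inner_add_left
            inner_add_right l_def power2_eq_square algebra_simps)
      moreover have "(x + t *\<^sub>R y) \<bullet> (x + t *\<^sub>R y) = 1 + t^2 * (y \<bullet> y)"
        using y(2) xx by (simp add: inner_add_left inner_add_right inner_commute power2_eq_square algebra_simps)
      ultimately show ?thesis using le by (simp add: algebra_simps)
    qed
    thus ?thesis using quadratic_nonpos_imp_linear_coeff_zero by fastforce
  qed
  define w where "w = A *v x - l *\<^sub>R x"
  have wV: "w \<in> V" unfolding w_def using V inv x(1) by (simp add: subspace_diff subspace_scale)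
  have "w \<bullet> x = (A *v x) \<bullet> x - l * (x \<bullet> x)" unfolding w_def by (simp add: inner_diff_left)
  hence wx: "w \<bullet> x = 0" using xx unfolding l_def by (simp add: inner_commute)
  have "w \<bullet> w = w \<bullet> (A *v x) - l * (w \<bullet> x)" unfolding w_def by (simp add: inner_diff_right)
  also have "\<dots> = 0" using orth[OF wV wx] wx by simp
  finally show ?thesis unfolding w_def l_def by simp
qed

lemma symmetric_matrix_orthonormal_eigenvectors:
  fixes A :: "real^'n^'n"
  assumes sym: "transpose A = A"
  shows "subspace V \<Longrightarrow> (\<And>y. y \<in> V \<Longrightarrow> A *v y \<in> V) \<Longrightarrow> dim V = n \<Longrightarrow>
    \<exists>B. B \<subseteq> V \<and> finite B \<and> card B = n \<and> pairwise orthogonal B \<and>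
        (\<forall>x\<in>B. norm x = 1 \<and> A *v x = (x \<bullet> (A *v x)) *\<^sub>R x)"
proof (induction n arbitrary: V)
  case 0
  then show ?case by (intro exI[of _ "{}"]) auto
next
  case (Suc n)
  obtain v where v: "v \<in> V" "v \<noteq> 0" using Suc.prems(3) dim_eq_0[of V] by auto
  obtain x where x: "x \<in> V" "norm x = 1" "A *v x = (x \<bullet> (A *v x)) *\<^sub>R x"
    using rayleigh_quotient_max_exists[OF Suc.prems(1) v, of A]
      rayleigh_quotient_maximiser_eigenvector[OF sym Suc.prems(1,2)] by metis
  define W where "W = {y \<in> V. \<forall>z \<in> span {x}. orthogonal z y}"
  have W_iff: "y \<in> W \<longleftrightarrow> y \<in> V \<and> x \<bullet> y = 0" for y
    unfolding W_def span_singleton orthogonal_def by (auto simp: inner_scaleR_left)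
  have "W = V \<inter> {y. \<forall>z \<in> span {x}. orthogonal z y}" unfolding W_def by auto
  hence subW: "subspace W" using Suc.prems(1) subspace_orthogonal_to_vectors subspace_inter by metis
  have "span {x} \<subseteq> V" using x(1) Suc.prems(1) by (simp add: span_minimal)
  hence "dim W + dim (span {x}) = dim V"
    unfolding W_def by (intro dim_subspace_orthogonal_to_vectors) (auto simp: Suc.prems(1))
  moreover have "dim (span {x}) = 1" using x(2) by auto
  ultimately have dW: "dim W = n" using Suc.prems(3) by simp
  have invW: "A *v y \<in> W" if y: "y \<in> W" for y
  proof -
    have "x \<bullet> (A *v y) = (A *v x) \<bullet> y" using inner_matrix_transpose[of x A y] sym by simp
    also have "\<dots> = 0" using y W_iff x(3) by (metis inner_scaleR_left mult_zero_right)
    finally show ?thesis using y W_iff Suc.prems(2) by auto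
  qed
  obtain B where B: "B \<subseteq> W" "finite B" "card B = n" "pairwise orthogonal B"
    "\<forall>y\<in>B. norm y = 1 \<and> A *v y = (y \<bullet> (A *v y)) *\<^sub>R y"
    using Suc.IH[OF subW invW dW] by blast
  have orthx: "x \<bullet> b = 0" if "b \<in> B" for b using that B(1) W_iff by blast
  hence "x \<notin> B" using x(2) by (fastforce simp: norm_eq_1)
  show ?case
  proof (intro exI[of _ "insert x B"] conjI)
    show "insert x B \<subseteq> V" using B(1) x(1) W_iff by auto
    show "pairwise orthogonal (insert x B)"
      using B(4) orthx by (auto simp: pairwise_insert orthogonal_def inner_commute)
  qed (use B x \<open>x \<notin> B\<close> in auto)
qed

definition diagonal_matrix :: "real^'k \<Rightarrow> real^'k^'k" where
  "diagonal_matrix s = (\<chi> i j. if i = j then s $ i else 0)"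

lemma matrix_mul_diagonal_matrix_nth: "(M ** diagonal_matrix s) $ i $ j = M $ i $ j * s $ j"
  by (simp add: diagonal_matrix_def matrix_matrix_mult_def if_distrib[of "\<lambda>y. _ * y"] cong: if_cong)

lemma diagonal_matrix_mult: "diagonal_matrix s ** diagonal_matrix t = diagonal_matrix (\<chi> i. s $ i * t $ i)"
  by (simp add: vec_eq_iff matrix_mul_diagonal_matrix_nth) (simp add: diagonal_matrix_def)

lemma transpose_diagonal_matrix [simp]: "transpose (diagonal_matrix s) = diagonal_matrix s"
  by (simp add: diagonal_matrix_def transpose_def vec_eq_iff)

lemma diagonal_matrix_mult_vector: "diagonal_matrix s *v y = (\<chi> i. s $ i * y $ i)"
  by (simp add: diagonal_matrix_def matrix_vector_mult_def vec_eq_iff if_distrib[of "\<lambda>z. z * _"] cong: if_cong)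

lemma trace_diagonal_matrix: "trace (diagonal_matrix s) = (\<Sum>i\<in>UNIV. s $ i)"
  by (simp add: diagonal_matrix_def trace_def)

lemma trace_mult_diagonal_matrix: "trace (M ** diagonal_matrix s) = (\<Sum>i\<in>UNIV. M $ i $ i * s $ i)"
  by (simp add: trace_def matrix_mul_diagonal_matrix_nth)

lemma symmetric_matrix_diagonalization:
  fixes A :: "real^'n^'n"
  assumes sym: "transpose A = A"
  obtains Q d where "orthogonal_matrix Q" "A = Q ** diagonal_matrix d ** transpose Q"
proof -
  obtain B where B: "finite B" "card B = CARD('n)" "pairwise orthogonal B"
      "\<forall>x\<in>B. norm x = 1 \<and> A *v x = (x \<bullet> (A *v x)) *\<^sub>R x"
    using symmetric_matrix_orthonormal_eigenvectors[OF sym, of UNIV "CARD('n)"] by auto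
  then obtain f where f: "bij_betw f (UNIV::'n set) B"
    by (metis finite_class.finite_UNIV finite_same_card_bij)
  have fB: "f i \<in> B" for i using f by (auto simp: bij_betw_def)
  have [simp]: "orthogonal (f i) (f j)" if "i \<noteq> j" for i j
  proof -
    have "f i \<noteq> f j" using f that by (auto simp: bij_betw_def inj_on_def)
    thus ?thesis using B(3) fB unfolding pairwise_def by blast
  qed
  define Q where "Q = (\<chi> i j. f j $ i)"
  define d where "d = (\<chi> j. f j \<bullet> (A *v f j))"
  have oQ: "orthogonal_matrix Q"
    unfolding Q_def using B(4) fB by (simp add: orthogonal_matrix_orthonormal_columns column_def)
  have "A *v f j = d $ j *\<^sub>R f j" for j using B(4) fB unfolding d_def by auto
  hence "(A ** Q) $ i $ j = (Q ** diagonal_matrix d) $ i $ j" for i j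
    unfolding Q_def matrix_mul_diagonal_matrix_nth
    by (simp add: matrix_matrix_mult_def matrix_vector_mult_def vec_eq_iff)
  hence "A ** Q = Q ** diagonal_matrix d" by (simp add: vec_eq_iff)
  hence "A = Q ** diagonal_matrix d ** transpose Q"
    using oQ by (metis matrix_mul_assoc matrix_mul_rid orthogonal_matrix_def)
  thus ?thesis using that oQ by blast
qed

lemma transpose_matrix_mult_nth: "(transpose A ** B) $ i $ j = column i A \<bullet> column j (B :: real^'k^'m)"
  by (simp add: matrix_matrix_mult_def transpose_def column_def inner_vec_def)

lemma column_matrix_mult: "column j (A ** B) = A *v column j B"
  by (simp add: matrix_matrix_mult_def matrix_vector_mult_def column_def vec_eq_iff)

lemma orthogonal_matrix_cancel:
  assumes "orthogonal_matrix Q" "A ** Q = B ** Q"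
  shows "A = B"
proof -
  have "A = A ** (Q ** transpose Q)" "B = B ** (Q ** transpose Q)"
    using assms(1) by (simp_all add: orthogonal_matrix_def)
  thus ?thesis using assms(2) by (simp add: matrix_mul_assoc)
qed

section \<open>Positive semidefinite square roots\<close>

lemma psd_gram: "psd (transpose X ** X)"
proof -
  have "x \<bullet> ((transpose X ** X) *v x) = (X *v x) \<bullet> (X *v x)" for x
    using inner_matrix_transpose[of x "transpose X" "X *v x"]
    by (simp only: matrix_vector_mul_assoc transpose_transpose)
  thus ?thesis unfolding psd_def by (simp add: matrix_transpose_mul)
qed

lemma psd_conj_diagonal_matrix:
  fixes V :: "real^'k^'m"
  assumes "\<forall>i. 0 \<le> s $ i"
  shows "psd (V ** diagonal_matrix s ** transpose V)"
  unfolding psd_def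
proof (intro conjI allI)
  show "transpose (V ** diagonal_matrix s ** transpose V) = V ** diagonal_matrix s ** transpose V"
    by (simp add: matrix_transpose_mul matrix_mul_assoc)
  fix x
  define y where "y = transpose V *v x"
  have "x \<bullet> ((V ** diagonal_matrix s ** transpose V) *v x) = y \<bullet> (diagonal_matrix s *v y)"
    unfolding y_def by (simp add: inner_matrix_transpose matrix_vector_mul_assoc[symmetric])
  also have "\<dots> = (\<Sum>i\<in>UNIV. s $ i * (y $ i)^2)"
    by (simp add: diagonal_matrix_mult_vector inner_vec_def power2_eq_square ac_simps)
  also have "\<dots> \<ge> 0" using assms by (intro sum_nonneg) auto
  finally show "0 \<le> x \<bullet> ((V ** diagonal_matrix s ** transpose V) *v x)" .
qed

lemma diagonal_matrix_sandwich_mult: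
  fixes V :: "real^'k^'m" and W :: "real^'k^'a" and W' :: "real^'k^'b"
  assumes "transpose V ** V = mat 1"
  shows "(W ** diagonal_matrix s ** transpose V) ** (V ** diagonal_matrix t ** transpose W')
    = W ** diagonal_matrix (\<chi> i. s $ i * t $ i) ** transpose W'"
proof -
  have "(W ** diagonal_matrix s ** transpose V) ** (V ** diagonal_matrix t ** transpose W')
      = W ** diagonal_matrix s ** (transpose V ** V) ** diagonal_matrix t ** transpose W'"
    by (simp only: matrix_mul_assoc)
  also have "\<dots> = W ** (diagonal_matrix s ** diagonal_matrix t) ** transpose W'"
    by (simp only: assms matrix_mul_rid matrix_mul_assoc)
  finally show ?thesis by (simp only: diagonal_matrix_mult)
qed

lemma trace_conj_diagonal_matrix:
  fixes V :: "real^'k^'m"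
  assumes "transpose V ** V = mat 1"
  shows "trace (V ** diagonal_matrix s ** transpose V) = (\<Sum>i\<in>UNIV. s $ i)"
proof -
  have "trace (V ** diagonal_matrix s ** transpose V) = trace (diagonal_matrix s ** transpose V ** V)"
    using trace_mul_sym[of V "diagonal_matrix s ** transpose V"] by (simp only: matrix_mul_assoc)
  thus ?thesis by (simp only: assms matrix_mul_assoc[symmetric] matrix_mul_rid trace_diagonal_matrix)
qed

lemma psd_diagonalization:
  fixes A :: "real^'n^'n"
  assumes "psd A"
  obtains Q d where "orthogonal_matrix Q" "\<forall>i. 0 \<le> d $ i" "A = Q ** diagonal_matrix d ** transpose Q"
proof -
  obtain Q d where Q: "orthogonal_matrix Q" and A: "A = Q ** diagonal_matrix d ** transpose Q"
    using symmetric_matrix_diagonalization assms unfolding psd_def by metis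
  have "transpose Q ** (A ** Q) = (transpose Q ** Q) ** diagonal_matrix d ** (transpose Q ** Q)"
    unfolding A by (simp only: matrix_mul_assoc)
  hence QAQ: "transpose Q ** (A ** Q) = diagonal_matrix d" using Q by (simp add: orthogonal_matrix_def)
  have "d $ i = column i Q \<bullet> (A *v column i Q)" for i
  proof -
    have "d $ i = (transpose Q ** (A ** Q)) $ i $ i" using QAQ by (simp add: diagonal_matrix_def)
    thus ?thesis by (simp only: transpose_matrix_mult_nth column_matrix_mult)
  qed
  hence "0 \<le> d $ i" for i using assms unfolding psd_def by simp
  thus ?thesis using that Q A by blast
qed

text \<open>A psd \<open>P\<close> cannot map an eigenvector of \<open>P\<^sup>2\<close> for \<open>m\<^sup>2\<close> to anything but \<open>m v\<close>:
  \<open>P v - m v\<close> would be an eigenvector for \<open>-m\<close>.\<close>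

lemma psd_eigenvector_of_square:
  fixes P :: "real^'n^'n"
  assumes P: "psd P" and m: "0 \<le> m" and sq: "P *v (P *v v) = (m * m) *\<^sub>R v"
  shows "P *v v = m *\<^sub>R v"
proof (cases "m = 0")
  case True
  have "(P *v v) \<bullet> (P *v v) = v \<bullet> (P *v (P *v v))"
    using P inner_matrix_transpose[of v P "P *v v"] unfolding psd_def by (simp add: inner_commute)
  thus ?thesis using sq True by simp
next
  case False
  define w where "w = P *v v - m *\<^sub>R v"
  have "P *v w = (- m) *\<^sub>R w"
    unfolding w_def using sq by (simp add: matrix_vector_mult_diff_distrib matrix_vector_mult_scaleR algebra_simps)
  hence "0 \<le> - m * (w \<bullet> w)" using P unfolding psd_def by (metis inner_scaleR_right)
  hence "w \<bullet> w \<le> 0" using m False by (simp add: mult_le_0_iff)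
  hence "w \<bullet> w = 0" using inner_ge_zero[of w] by linarith
  thus ?thesis unfolding w_def by simp
qed

lemma psd_sqrt_unique:
  fixes P P' :: "real^'n^'n"
  assumes P: "psd P" and P': "psd P'" and eq: "P ** P = P' ** P'"
  shows "P = P'"
proof -
  obtain Q d where Q: "orthogonal_matrix Q" and d: "\<forall>i. 0 \<le> d $ i"
    and Pd: "P = Q ** diagonal_matrix d ** transpose Q"
    using psd_diagonalization[OF P] by blast
  have "P ** Q = Q ** diagonal_matrix d"
    using Q unfolding Pd orthogonal_matrix_def by (simp add: matrix_mul_assoc[symmetric])
  hence eig: "P *v column j Q = d $ j *\<^sub>R column j Q" for j
    using arg_cong[of _ _ "column j"]
    by (simp add: column_matrix_mult[symmetric] vec_eq_iff matrix_mul_diagonal_matrix_nth)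
      (simp add: column_def)
  have "P' *v column j Q = d $ j *\<^sub>R column j Q" for j
  proof (rule psd_eigenvector_of_square[OF P'])
    have "P' *v (P' *v column j Q) = P *v (P *v column j Q)" by (simp add: matrix_vector_mul_assoc eq)
    thus "P' *v (P' *v column j Q) = (d $ j * d $ j) *\<^sub>R column j Q"
      by (simp add: eig matrix_vector_mult_scaleR)
  qed (use d in auto)
  hence "column j (P ** Q) = column j (P' ** Q)" for j by (simp add: column_matrix_mult eig)
  hence "P ** Q = P' ** Q" by (simp add: column_def vec_eq_iff)
  thus ?thesis by (rule orthogonal_matrix_cancel[OF Q])
qed

lemma psd_sqrt_eqI:
  assumes "psd P" "P ** P = A"
  shows "psd_sqrt A = P"
  unfolding psd_sqrt_def using assms psd_sqrt_unique by (intro the_equality) auto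

lemma psd_sqrt_conj_diagonal_matrix:
  fixes V :: "real^'k^'m"
  assumes "transpose V ** V = mat 1" "\<forall>i. 0 \<le> s $ i"
  shows "psd_sqrt (V ** diagonal_matrix (\<chi> i. s $ i * s $ i) ** transpose V) = V ** diagonal_matrix s ** transpose V"
  using assms by (intro psd_sqrt_eqI psd_conj_diagonal_matrix diagonal_matrix_sandwich_mult)

lemma psd_sqrt_psd_square:
  fixes A :: "real^'n^'n"
  assumes "psd A"
  shows "psd (psd_sqrt A)" "psd_sqrt A ** psd_sqrt A = A"
proof -
  obtain Q d where Q: "orthogonal_matrix Q" and d: "\<forall>i. 0 \<le> d $ i"
    and A: "A = Q ** diagonal_matrix d ** transpose Q"
    using psd_diagonalization[OF assms] by blast
  define r where "r = (\<chi> i. sqrt (d $ i))"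
  have r: "\<forall>i. 0 \<le> r $ i" "(\<chi> i. r $ i * r $ i) = d" unfolding r_def using d by (auto simp: vec_eq_iff)
  have QQ: "transpose Q ** Q = mat 1" using Q by (simp add: orthogonal_matrix_def)
  have "psd_sqrt A = Q ** diagonal_matrix r ** transpose Q"
    using psd_sqrt_conj_diagonal_matrix[OF QQ r(1)] unfolding A r(2) .
  thus "psd (psd_sqrt A)" "psd_sqrt A ** psd_sqrt A = A"
    unfolding A using psd_conj_diagonal_matrix[OF r(1)] diagonal_matrix_sandwich_mult[OF QQ, of Q r r] r(2)
    by simp_all
qed

section \<open>Thin singular value decomposition\<close>

lemma orthonormal_basis_orthogonal_complement:
  fixes S :: "(real^'m) set"
  obtains B where "finite B" "card B = CARD('m) - dim (span S)" "pairwise orthogonal B"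
    "\<And>x. x \<in> B \<Longrightarrow> norm x = 1" "\<And>x y. x \<in> B \<Longrightarrow> y \<in> span S \<Longrightarrow> y \<bullet> x = 0"
proof -
  define W where "W = {y \<in> UNIV. \<forall>x \<in> span S. orthogonal x y}"
  have "subspace W" unfolding W_def using subspace_orthogonal_to_vectors by simp
  then obtain B where B: "B \<subseteq> W" "pairwise orthogonal B" "\<And>x. x \<in> B \<Longrightarrow> norm x = 1"
      "independent B" "card B = dim W"
    using orthonormal_basis_subspace by metis
  have "dim W + dim (span S) = dim (UNIV :: (real^'m) set)"
    unfolding W_def by (intro dim_subspace_orthogonal_to_vectors) (auto simp: subspace_span)
  hence "card B = CARD('m) - dim (span S)" using B(5) by simp
  moreover have "finite B" using B(4) by (simp add: independent_imp_finite)
  ultimately show ?thesis using that B unfolding W_def orthogonal_def by blast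
qed

lemma orthonormal_family_extend:
  fixes u :: "'k::finite \<Rightarrow> real^'m"
  assumes card: "CARD('k) \<le> CARD('m)"
    and orth: "\<And>i j. i \<in> I \<Longrightarrow> j \<in> I \<Longrightarrow> u i \<bullet> u j = (if i = j then 1 else 0)"
  obtains g where "\<And>i. i \<in> I \<Longrightarrow> g i = u i" "\<And>i j. g i \<bullet> g j = (if i = j then 1 else 0)"
proof -
  have "inj_on u I"
  proof
    fix i j assume ij: "i \<in> I" "j \<in> I" "u i = u j"
    hence "u i \<bullet> u j = 1" using orth[of i i] by simp
    thus "i = j" using orth[OF ij(1,2)] by (auto split: if_splits)
  qed
  moreover have "pairwise orthogonal (u ` I)" "0 \<notin> u ` I"
    unfolding pairwise_def orthogonal_def using orth by force+
  hence "independent (u ` I)" by (rule pairwise_orthogonal_independent)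
  ultimately have "dim (span (u ` I)) = card I" by (simp add: dim_eq_card_independent card_image)
  then obtain B where B: "finite B" "card B = CARD('m) - card I" "pairwise orthogonal B"
      "\<And>x. x \<in> B \<Longrightarrow> norm x = 1" "\<And>x y. x \<in> B \<Longrightarrow> y \<in> span (u ` I) \<Longrightarrow> y \<bullet> x = 0"
    using orthonormal_basis_orthogonal_complement by metis
  have "card (UNIV - I) \<le> card B" using B(2) card card_Diff_subset[of I UNIV] by simp
  then obtain h where h: "h ` (UNIV - I) \<subseteq> B" "inj_on h (UNIV - I)"
    using card_le_inj[of "UNIV - I" B] B(1) by auto
  define g where "g i = (if i \<in> I then u i else h i)" for i
  have cross: "u a \<bullet> h b = 0" if "a \<in> I" "b \<notin> I" for a b
  proof (rule B(5))
    show "h b \<in> B" using h(1) that(2) by auto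
    show "u a \<in> span (u ` I)" using that(1) by (simp add: span_base)
  qed
  have g_orth: "g i \<bullet> g j = (if i = j then 1 else 0)" for i j
  proof (cases "i \<in> I"; cases "j \<in> I")
    assume "i \<notin> I" "j \<notin> I"
    moreover from this have "h i \<in> B" "h j \<in> B" "i \<noteq> j \<Longrightarrow> h i \<noteq> h j"
      using h by (auto simp: inj_on_def)
    ultimately show ?thesis
      using B(3,4) unfolding g_def pairwise_def orthogonal_def by (auto simp: norm_eq_1)
  qed (use orth cross in \<open>auto simp: g_def inner_commute\<close>)
  show ?thesis using g_orth by (intro that[of g]) (simp_all add: g_def)
qed

lemma orthogonal_columns_factorization:
  fixes G :: "real^'k^'m"
  assumes card: "CARD('k) \<le> CARD('m)" and GG: "transpose G ** G = diagonal_matrix d"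
  obtains U s where "transpose U ** U = mat 1" "\<forall>i. 0 \<le> s $ i" "G = U ** diagonal_matrix s"
proof -
  have cG: "column i G \<bullet> column j G = (if i = j then d $ i else 0)" for i j
    using arg_cong[OF GG, of "\<lambda>A. A $ i $ j"] by (simp add: transpose_matrix_mult_nth diagonal_matrix_def)
  define s where "s = (\<chi> i. norm (column i G))"
  define I where "I = {i. s $ i \<noteq> 0}"
  define u where "u i = (1 / s $ i) *\<^sub>R column i G" for i
  have "u i \<bullet> u j = (if i = j then 1 else 0)" if "i \<in> I" "j \<in> I" for i j
    using that cG[of i j] unfolding u_def I_def s_def
    by (auto simp: power2_norm_eq_inner[symmetric] power2_eq_square)
  then obtain g where g: "\<And>i. i \<in> I \<Longrightarrow> g i = u i" "\<And>i j. g i \<bullet> g j = (if i = j then 1 else 0)"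
    using orthonormal_family_extend[OF card] by metis
  define U where "U = (\<chi> a b. g b $ a)"
  have cU: "column b U = g b" for b unfolding U_def column_def by (simp add: vec_eq_iff)
  have "transpose U ** U = mat 1"
    by (simp add: matrix_mult_transpose_dot_column cU g(2) mat_def vec_eq_iff)
  moreover have "\<forall>i. 0 \<le> s $ i" unfolding s_def by simp
  moreover have "column j G = s $ j *\<^sub>R g j" for j
    using g(1)[of j] unfolding u_def I_def s_def by (cases "column j G = 0") auto
  hence "G = U ** diagonal_matrix s"
    by (simp add: vec_eq_iff matrix_mul_diagonal_matrix_nth U_def column_def)
  ultimately show ?thesis using that by blast
qed

lemma thin_svd:
  fixes M :: "real^'k^'m"
  assumes "CARD('k) \<le> CARD('m)"
  obtains U Q s where "transpose U ** U = mat 1" "orthogonal_matrix Q" "\<forall>i. 0 \<le> s $ i"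
    "M = U ** diagonal_matrix s ** transpose Q"
proof -
  obtain Q d where Q: "orthogonal_matrix Q" and MM: "transpose M ** M = Q ** diagonal_matrix d ** transpose Q"
    using psd_diagonalization[OF psd_gram] by metis
  have QQ: "transpose Q ** Q = mat 1" "Q ** transpose Q = mat 1" using Q by (auto simp: orthogonal_matrix_def)
  have "transpose (M ** Q) ** (M ** Q) = transpose Q ** (transpose M ** M) ** Q"
    by (simp only: matrix_transpose_mul matrix_mul_assoc)
  also have "\<dots> = (transpose Q ** Q) ** diagonal_matrix d ** (transpose Q ** Q)"
    by (simp only: MM matrix_mul_assoc)
  finally have "transpose (M ** Q) ** (M ** Q) = diagonal_matrix d" by (simp add: QQ)
  then obtain U s where U: "transpose U ** U = mat 1" "\<forall>i. 0 \<le> s $ i" "M ** Q = U ** diagonal_matrix s"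
    using orthogonal_columns_factorization[OF assms] by metis
  have "M = M ** Q ** transpose Q" by (simp add: QQ flip: matrix_mul_assoc)
  also have "\<dots> = U ** diagonal_matrix s ** transpose Q" by (simp only: U(3))
  finally show ?thesis using that U Q by blast
qed

section \<open>Trace maximisation over isometries\<close>

lemma psd_sqrt_gram_svd:
  fixes M :: "real^'k^'m"
  assumes U: "transpose U ** U = mat 1" and Q: "orthogonal_matrix Q" and s: "\<forall>i. 0 \<le> s $ i"
    and M: "M = U ** diagonal_matrix s ** transpose Q"
  shows "psd_sqrt (transpose M ** M) = Q ** diagonal_matrix s ** transpose Q"
    and "psd_sqrt (M ** transpose M) = U ** diagonal_matrix s ** transpose U"
proof -
  have QQ: "transpose Q ** Q = mat 1" using Q by (simp add: orthogonal_matrix_def)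
  have tM: "transpose M = Q ** diagonal_matrix s ** transpose U"
    unfolding M by (simp add: matrix_transpose_mul matrix_mul_assoc)
  have "transpose M ** M = Q ** diagonal_matrix (\<chi> i. s $ i * s $ i) ** transpose Q"
    unfolding tM by (subst M) (rule diagonal_matrix_sandwich_mult[OF U])
  thus "psd_sqrt (transpose M ** M) = Q ** diagonal_matrix s ** transpose Q"
    using psd_sqrt_conj_diagonal_matrix[OF QQ s] by simp
  have "M ** transpose M = U ** diagonal_matrix (\<chi> i. s $ i * s $ i) ** transpose U"
    unfolding tM by (subst M) (rule diagonal_matrix_sandwich_mult[OF QQ])
  thus "psd_sqrt (M ** transpose M) = U ** diagonal_matrix s ** transpose U"
    using psd_sqrt_conj_diagonal_matrix[OF U s] by simp
qed

lemma trace_psd_sqrt_gram_commute_tall: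
  fixes M :: "real^'k^'m"
  assumes "CARD('k) \<le> CARD('m)"
  shows "trace (psd_sqrt (M ** transpose M)) = trace (psd_sqrt (transpose M ** M))"
proof -
  obtain U Q s where svd: "transpose U ** U = mat 1" "orthogonal_matrix Q" "\<forall>i. 0 \<le> s $ i"
      "M = U ** diagonal_matrix s ** transpose Q"
    using thin_svd[OF assms] by blast
  have QQ: "transpose Q ** Q = mat 1" using svd(2) by (simp add: orthogonal_matrix_def)
  show ?thesis
    using psd_sqrt_gram_svd[OF svd] trace_conj_diagonal_matrix[OF svd(1)] trace_conj_diagonal_matrix[OF QQ]
    by simp
qed

lemma trace_psd_sqrt_gram_commute:
  fixes M :: "real^'k^'m"
  shows "trace (psd_sqrt (M ** transpose M)) = trace (psd_sqrt (transpose M ** M))"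
proof (cases "CARD('k) \<le> CARD('m)")
  case True
  thus ?thesis by (rule trace_psd_sqrt_gram_commute_tall)
next
  case False
  thus ?thesis using trace_psd_sqrt_gram_commute_tall[of "transpose M"] by simp
qed

lemma transpose_mult_isometries_diagonal_le_1:
  fixes W U :: "real^'k^'n"
  assumes "transpose W ** W = mat 1" "transpose U ** U = mat 1"
  shows "(transpose W ** U) $ i $ i \<le> 1"
proof -
  have "norm (column i W) = 1" "norm (column i U) = 1"
    using assms[THEN arg_cong, of "\<lambda>A. A $ i $ i"]
    by (simp_all add: transpose_matrix_mult_nth mat_def norm_eq_1)
  thus ?thesis using norm_cauchy_schwarz[of "column i W" "column i U"]
    by (simp add: transpose_matrix_mult_nth)
qed

lemma trace_isometry_mult_le:
  fixes C Z :: "real^'k^'n"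
  assumes card: "CARD('k) \<le> CARD('n)" and Z: "transpose Z ** Z = mat 1"
  shows "trace (transpose Z ** C) \<le> trace (psd_sqrt (transpose C ** C))"
proof -
  obtain U Q s where svd: "transpose U ** U = mat 1" "orthogonal_matrix Q" "\<forall>i. 0 \<le> s $ i"
      "C = U ** diagonal_matrix s ** transpose Q"
    using thin_svd[OF card] by blast
  have QQ: "transpose Q ** Q = mat 1" "Q ** transpose Q = mat 1"
    using svd(2) by (auto simp: orthogonal_matrix_def)
  define W where "W = Z ** Q"
  have "transpose W ** W = transpose Q ** (transpose Z ** Z) ** Q"
    unfolding W_def by (simp only: matrix_transpose_mul matrix_mul_assoc)
  hence W: "transpose W ** W = mat 1" using Z QQ by simp
  have "trace (transpose Z ** C) = trace ((transpose Z ** U ** diagonal_matrix s) ** transpose Q)"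
    unfolding svd(4) by (simp only: matrix_mul_assoc)
  also have "\<dots> = trace (transpose W ** U ** diagonal_matrix s)"
    unfolding W_def trace_mul_sym[of _ "transpose Q"] by (simp only: matrix_transpose_mul matrix_mul_assoc)
  also have "\<dots> = (\<Sum>i\<in>UNIV. (transpose W ** U) $ i $ i * s $ i)"
    by (rule trace_mult_diagonal_matrix)
  also have "\<dots> \<le> (\<Sum>i\<in>UNIV. s $ i)"
  proof (rule sum_mono)
    fix i
    show "(transpose W ** U) $ i $ i * s $ i \<le> s $ i"
      using mult_right_mono[OF transpose_mult_isometries_diagonal_le_1[OF W svd(1)], of "s $ i"] svd(3)
      by simp
  qed
  also have "\<dots> = trace (psd_sqrt (transpose C ** C))"
    using psd_sqrt_gram_svd(1)[OF svd] trace_conj_diagonal_matrix[OF QQ(1)] by simp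
  finally show ?thesis .
qed

lemma trace_isometry_mult_attains:
  fixes C :: "real^'k^'n"
  assumes card: "CARD('k) \<le> CARD('n)"
  obtains Z where "transpose Z ** Z = mat 1" "trace (transpose Z ** C) = trace (psd_sqrt (transpose C ** C))"
proof -
  obtain U Q s where svd: "transpose U ** U = mat 1" "orthogonal_matrix Q" "\<forall>i. 0 \<le> s $ i"
      "C = U ** diagonal_matrix s ** transpose Q"
    using thin_svd[OF card] by blast
  have QQ: "transpose Q ** Q = mat 1" "Q ** transpose Q = mat 1"
    using svd(2) by (auto simp: orthogonal_matrix_def)
  define Z where "Z = U ** transpose Q"
  have tZ: "transpose Z = Q ** transpose U" unfolding Z_def by (simp add: matrix_transpose_mul)
  have "transpose Z ** Z = Q ** (transpose U ** U) ** transpose Q"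
    unfolding tZ by (simp only: Z_def matrix_mul_assoc)
  hence "transpose Z ** Z = mat 1" using svd(1) QQ by simp
  moreover have "transpose Z ** C = Q ** (transpose U ** U) ** diagonal_matrix s ** transpose Q"
    unfolding tZ svd(4) by (simp only: matrix_mul_assoc)
  hence "trace (transpose Z ** C) = trace (psd_sqrt (transpose C ** C))"
    using psd_sqrt_gram_svd(1)[OF svd] trace_conj_diagonal_matrix[OF QQ(1)] svd(1) by simp
  ultimately show ?thesis using that by blast
qed

lemma transpose_diff: "transpose (A - B) = transpose A - transpose (B :: real^'a^'b)"
  by (simp add: transpose_def vec_eq_iff)

lemma matrix_diff_ldistrib: "(A :: real^'b^'a) ** (B - C) = A ** B - A ** C"
  by (simp add: matrix_matrix_mult_def vec_eq_iff sum_subtractf right_diff_distrib)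

lemma matrix_diff_rdistrib: "((A :: real^'b^'a) - B) ** C = A ** C - B ** C"
  by (simp add: matrix_matrix_mult_def vec_eq_iff sum_subtractf left_diff_distrib)

lemma trace_transpose: "trace (transpose A) = trace (A :: real^'n^'n)"
  by (simp add: trace_def transpose_def)

lemma frob_sq_eq_trace: "frob_sq F = trace (transpose F ** F)"
proof -
  have "trace (transpose F ** F) = (\<Sum>k\<in>UNIV. \<Sum>i\<in>UNIV. F $ i $ k * F $ i $ k)"
    unfolding trace_def by (simp add: matrix_matrix_mult_def transpose_def)
  also have "\<dots> = (\<Sum>i\<in>UNIV. \<Sum>k\<in>UNIV. F $ i $ k * F $ i $ k)" by (rule sum.swap)
  finally show ?thesis unfolding frob_sq_def by (simp add: power2_eq_square)
qed

lemma frob_sq_nonneg: "0 \<le> frob_sq F"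
  unfolding frob_sq_def by (intro sum_nonneg) auto

lemma frob_sq_diff_isometry_mult:
  fixes X :: "real^'p^'n" and L :: "real^'k^'p" and Z :: "real^'k^'n"
  assumes Z: "transpose Z ** Z = mat 1"
  shows "frob_sq (X - Z ** transpose L) =
     trace (transpose X ** X) - 2 * trace (transpose Z ** (X ** L)) + trace (L ** transpose L)"
proof -
  have cross: "trace (L ** transpose Z ** X) = trace (transpose Z ** (X ** L))"
    using trace_mul_sym[of L "transpose Z ** X"] by (simp only: matrix_mul_assoc)
  have "trace (transpose X ** (Z ** transpose L)) = trace (transpose (transpose X ** (Z ** transpose L)))"
    by (rule trace_transpose[symmetric])
  also have "\<dots> = trace (L ** transpose Z ** X)"
    by (simp only: matrix_transpose_mul transpose_transpose matrix_mul_assoc)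
  finally have cross': "trace (transpose X ** (Z ** transpose L)) = trace (transpose Z ** (X ** L))"
    using cross by simp
  have "L ** transpose Z ** (Z ** transpose L) = L ** (transpose Z ** Z) ** transpose L"
    by (simp only: matrix_mul_assoc)
  hence quad: "L ** transpose Z ** (Z ** transpose L) = L ** transpose L" by (simp add: Z)
  have "transpose (X - Z ** transpose L) ** (X - Z ** transpose L) =
        transpose X ** X - L ** transpose Z ** X
        - (transpose X ** (Z ** transpose L) - L ** transpose Z ** (Z ** transpose L))"
    by (simp only: transpose_diff matrix_transpose_mul transpose_transpose matrix_diff_ldistrib matrix_diff_rdistrib)
  thus ?thesis using cross cross' quad by (simp add: frob_sq_eq_trace trace_sub)
qed

lemma trace_psd_sqrt_bures_cross_term:
  fixes X :: "real^'p^'n" and L :: "real^'k^'p"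
  shows "trace (psd_sqrt (psd_sqrt (transpose X ** X) ** (L ** transpose L) ** psd_sqrt (transpose X ** X)))
       = trace (psd_sqrt (transpose (X ** L) ** (X ** L)))"
proof -
  define R where "R = psd_sqrt (transpose X ** X)"
  have R: "transpose R = R" "R ** R = transpose X ** X"
    using psd_sqrt_psd_square[OF psd_gram] unfolding R_def psd_def by auto
  have "R ** (L ** transpose L) ** R = (R ** L) ** transpose (R ** L)"
    by (simp only: matrix_transpose_mul R(1) matrix_mul_assoc)
  hence "trace (psd_sqrt (R ** (L ** transpose L) ** R)) = trace (psd_sqrt (transpose (R ** L) ** (R ** L)))"
    by (simp only: trace_psd_sqrt_gram_commute)
  also have "transpose (R ** L) ** (R ** L) = transpose L ** (R ** R) ** L"
    by (simp only: matrix_transpose_mul R(1) matrix_mul_assoc)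
  also have "\<dots> = transpose (X ** L) ** (X ** L)"
    by (simp only: R(2) matrix_transpose_mul matrix_mul_assoc)
  finally show ?thesis unfolding R_def .
qed

theorem lemma1:
  fixes X :: "real^'p^'n" and L :: "real^'k^'p"
  assumes "CARD('k) \<le> CARD('n)" and "CARD('k) \<le> CARD('p)"
  shows "(\<exists>Z\<in>(stiefel :: (real^'k^'n) set).
            frob_sq (X - Z ** transpose L) = (bures_wasserstein (transpose X ** X) (L ** transpose L))^2)
       \<and> (\<forall>Z\<in>(stiefel :: (real^'k^'n) set).
            (bures_wasserstein (transpose X ** X) (L ** transpose L))^2 \<le> frob_sq (X - Z ** transpose L))"
proof -
  let ?A = "transpose X ** X" and ?B = "L ** transpose L"
  let ?\<nu> = "trace (psd_sqrt (transpose (X ** L) ** (X ** L)))"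
  have frob: "frob_sq (X - Z ** transpose L) = trace ?A - 2 * trace (transpose Z ** (X ** L)) + trace ?B"
    if "Z \<in> stiefel" for Z :: "real^'k^'n"
    using frob_sq_diff_isometry_mult that unfolding stiefel_def by blast
  obtain Z0 :: "real^'k^'n" where Z0: "Z0 \<in> stiefel" "trace (transpose Z0 ** (X ** L)) = ?\<nu>"
    using trace_isometry_mult_attains[OF assms(1)] unfolding stiefel_def by blast
  have "0 \<le> trace ?A - 2 * ?\<nu> + trace ?B"
    using frob[OF Z0(1)] Z0(2) frob_sq_nonneg[of "X - Z0 ** transpose L"] by simp
  hence bw: "(bures_wasserstein ?A ?B)^2 = trace ?A - 2 * ?\<nu> + trace ?B"
    unfolding bures_wasserstein_def trace_psd_sqrt_bures_cross_term by simp
  show ?thesis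
  proof (intro conjI bexI ballI)
    show "frob_sq (X - Z0 ** transpose L) = (bures_wasserstein ?A ?B)^2" using frob[OF Z0(1)] Z0(2) bw by simp
    show "(bures_wasserstein ?A ?B)^2 \<le> frob_sq (X - Z ** transpose L)" if "Z \<in> stiefel" for Z
    proof -
      have "trace (transpose Z ** (X ** L)) \<le> ?\<nu>"
        using trace_isometry_mult_le[OF assms(1)] that unfolding stiefel_def by blast
      thus ?thesis using frob[OF that] bw by simp
    qed
  qed (rule Z0(1))
qed

end
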